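(* Let $X,Y$ be separable metric spaces, $\nu$ a locally finite Borel measure on $X$, and $f:X\to Y$ a Borel function with bounded image. Then for $\nu$-a.e. $p\in X$ the following holds: whenever $(B_n)_{n\ge1}$ is a sequence of Borel sets with $\mathrm{diam}(B_n)\to0$, $p\in B_n$ for all $n$, and such that there is $C>0$ with $0<\nu(4B_n)\le C\nu(B_n)$ for all $n$, one has $$\lim_{n\to\infty}\frac1{\nu(B_n)}\int_{B_n}\mathrm{dist}_Y(f(p),f(x))\,d\nu(x)=0.$$
   Context: For $B\subset X$, $4B$ denotes the open neighbourhood $\{x:\mathrm{dist}(x,B)<1.5\,\mathrm{diam}(B)\}$. *)

theory Defs
  imports "HOL-Analysis.Analysis"
begin

text \<open>Diameter with values in [0,\<infinity>] (infinite for unbounded sets, 0 for the empty set).\<close>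
definition diamE :: "'a::metric_space set \<Rightarrow> ennreal" where
  "diamE B = (SUP x\<in>B. SUP y\<in>B. ennreal (dist x y))"

definition enlarge4 :: "'a::metric_space set \<Rightarrow> 'a set" where
  "enlarge4 B = {x. ennreal (infdist x B) < ennreal (3/2) * diamE B}"

definition locally_finite_measure :: "'a::topological_space measure \<Rightarrow> bool" where
  "locally_finite_measure M \<longleftrightarrow>
     (\<forall>x. \<exists>U. open U \<and> x \<in> U \<and> emeasure M U < \<infinity>)"

end

theory Submission
  imports Defs
begin

(* The heart of the matter is a Lebesgue density theorem relative to the sets B of the statement:
   for a Borel set A, at almost every point p of A the relative measure of B - A tends to 0 along
   Borel sets B that shrink to p and satisfy 0 < \<mu>(4B) \<le> C \<mu>(B).  Within an open set of finite
   measure, the exceptional points are covered by such sets B inside an open V \<supseteq> A with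
   \<mu>(V - A) small (outer regularity); a Vitali-type selection (Zorn's lemma) gives a disjoint
   subfamily whose enlargements 4B still cover, and their total measure is controlled by
   \<mu>(V - A).  Applying this to the preimages under f of small balls around the points of a
   countable dense subset of Y, at almost every p the average of dist(f p, f x) over B is at most
   the radius of such a ball plus the bound of dist on f(X) times the relative measure of B - A. *)

lemma (in finite_measure) measure_Union_diff_finite_Union_less:
  fixes A :: "nat \<Rightarrow> 'a set"
  assumes A: "range A \<subseteq> sets M" and "e > 0"
  obtains n where "measure M ((\<Union>i. A i) - (\<Union>i<n. A i)) < e"
proof -
  have "range (\<lambda>n. \<Union>i<n. A i) \<subseteq> sets M" using A by auto
  moreover have "incseq (\<lambda>n. \<Union>i<n. A i)" by (intro monoI UN_mono) auto
  ultimately have "(\<lambda>n. measure M (\<Union>i<n. A i)) \<longlonglongrightarrow> measure M (\<Union>n. \<Union>i<n. A i)"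
    by (rule finite_Lim_measure_incseq)
  moreover have "(\<Union>n. \<Union>i<n. A i) = (\<Union>i. A i)" by blast
  ultimately have "(\<lambda>n. measure M (\<Union>i<n. A i)) \<longlonglongrightarrow> measure M (\<Union>i. A i)" by simp
  then have "eventually (\<lambda>n. measure M (\<Union>i. A i) - e < measure M (\<Union>i<n. A i)) sequentially"
    using \<open>e > 0\<close> by (intro order_tendstoD(1)) auto
  then obtain n where "measure M (\<Union>i. A i) - e < measure M (\<Union>i<n. A i)"
    by (meson eventually_sequentially order_refl)
  moreover have "measure M ((\<Union>i. A i) - (\<Union>i<n. A i)) = measure M (\<Union>i. A i) - measure M (\<Union>i<n. A i)"
    using A by (intro finite_measure_Diff) auto
  ultimately have "measure M ((\<Union>i. A i) - (\<Union>i<n. A i)) < e" by linarith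
  then show ?thesis by (rule that)
qed

definition closed_open_regular :: "'a::topological_space measure \<Rightarrow> 'a set \<Rightarrow> bool" where
  "closed_open_regular N A \<longleftrightarrow>
     (\<forall>e>0. \<exists>F U. closed F \<and> open U \<and> F \<subseteq> A \<and> A \<subseteq> U \<and> measure N (U - F) < e)"

lemma closed_open_regular_open:
  fixes N :: "'a::metric_space measure"
  assumes "finite_measure N" and sN: "sets N = sets borel" and "open S"
  shows "closed_open_regular N S"
  unfolding closed_open_regular_def
proof (intro allI impI)
  fix e :: real assume "e > 0"
  have "fsigma_in euclidean S"
    by (rule open_imp_fsigma_in[OF metrizable_space_euclidean]) (simp add: \<open>open S\<close>)
  then obtain C :: "nat \<Rightarrow> 'a set" where C: "\<And>n. closed (C n)" "(\<Union>n. C n) = S"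
    unfolding fsigma_in_ascending by auto
  then have "range C \<subseteq> sets N" using sN by auto
  then obtain n where "measure N ((\<Union>i. C i) - (\<Union>i<n. C i)) < e"
    by (rule finite_measure.measure_Union_diff_finite_Union_less[OF \<open>finite_measure N\<close> _ \<open>e > 0\<close>])
  moreover have "closed (\<Union>i<n. C i)" "(\<Union>i<n. C i) \<subseteq> S" using C by auto
  ultimately show "\<exists>F U. closed F \<and> open U \<and> F \<subseteq> S \<and> S \<subseteq> U \<and> measure N (U - F) < e"
    using C(2) \<open>open S\<close> by (intro exI[of _ "\<Union>i<n. C i"] exI[of _ S]) auto
qed

lemma closed_open_regular_Compl:
  assumes "closed_open_regular N A"
  shows "closed_open_regular N (UNIV - A)"
  unfolding closed_open_regular_def
proof (intro allI impI)
  fix e :: real assume "e > 0"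
  then obtain F U where FU: "closed F" "open U" "F \<subseteq> A" "A \<subseteq> U" "measure N (U - F) < e"
    using assms unfolding closed_open_regular_def by meson
  have "(UNIV - F) - (UNIV - U) = U - F" by blast
  then show "\<exists>F' U'. closed F' \<and> open U' \<and> F' \<subseteq> UNIV - A \<and> UNIV - A \<subseteq> U' \<and> measure N (U' - F') < e"
    using FU by (intro exI[of _ "UNIV - U"] exI[of _ "UNIV - F"]) (auto simp: open_Diff closed_Diff)
qed

lemma closed_open_regular_UN:
  assumes "finite_measure N" and sN: "sets N = sets borel"
    and A: "\<And>i::nat. closed_open_regular N (A i)"
  shows "closed_open_regular N (\<Union>i. A i)"
  unfolding closed_open_regular_def
proof (intro allI impI)
  interpret finite_measure N by fact
  fix e :: real assume "e > 0"
  define \<epsilon> where "\<epsilon> i = e/4 * (1/2)^i" for i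
  have "0 < \<epsilon> i" for i using \<open>e > 0\<close> by (simp add: \<epsilon>_def)
  then have "\<forall>i. \<exists>F U. closed F \<and> open U \<and> F \<subseteq> A i \<and> A i \<subseteq> U \<and> measure N (U - F) < \<epsilon> i"
    using A unfolding closed_open_regular_def by blast
  then obtain F U where FU: "\<And>i. closed (F i)" "\<And>i. open (U i)" "\<And>i. F i \<subseteq> A i"
    "\<And>i. A i \<subseteq> U i" "\<And>i. measure N (U i - F i) < \<epsilon> i"
    by metis
  have FUm: "F i \<in> sets N" "U i \<in> sets N" for i using FU sN by auto
  have \<epsilon>_sums: "\<epsilon> sums (e/2)"
    using sums_mult[OF geometric_sums[of "1/2::real"], of "e/4"] by (simp add: \<epsilon>_def[abs_def])
  have summ: "summable (\<lambda>i. measure N (U i - F i))"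
    using FU(5) by (intro summable_comparison_test'[OF sums_summable[OF \<epsilon>_sums], of 0])
      (auto intro: less_imp_le)
  have "measure N (\<Union>i. U i - F i) \<le> (\<Sum>i. measure N (U i - F i))"
    using FUm summ by (intro finite_measure_subadditive_countably) auto
  also have "\<dots> \<le> (\<Sum>i. \<epsilon> i)"
    using FU(5) summ sums_summable[OF \<epsilon>_sums] by (intro suminf_le) (auto intro: less_imp_le)
  finally have gap: "measure N (\<Union>i. U i - F i) \<le> e/2" using sums_unique[OF \<epsilon>_sums] by simp
  have "range F \<subseteq> sets N" "e/2 > 0" using FUm \<open>e > 0\<close> by auto
  then obtain n where tail: "measure N ((\<Union>i. F i) - (\<Union>i<n. F i)) < e/2"
    by (rule measure_Union_diff_finite_Union_less)
  have "(\<Union>i. U i) - (\<Union>i<n. F i) \<subseteq> (\<Union>i. U i - F i) \<union> ((\<Union>i. F i) - (\<Union>i<n. F i))" by blast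
  then have "measure N ((\<Union>i. U i) - (\<Union>i<n. F i))
      \<le> measure N (\<Union>i. U i - F i) + measure N ((\<Union>i. F i) - (\<Union>i<n. F i))"
    using FUm by (intro order_trans[OF finite_measure_mono measure_subadditive]) auto
  then have "measure N ((\<Union>i. U i) - (\<Union>i<n. F i)) < e" using gap tail by linarith
  moreover have "closed (\<Union>i<n. F i)" "open (\<Union>i. U i)" using FU(1,2) by auto
  moreover have "(\<Union>i<n. F i) \<subseteq> (\<Union>i. A i)" "(\<Union>i. A i) \<subseteq> (\<Union>i. U i)"
    using FU(3,4) by blast+
  ultimately show "\<exists>F U. closed F \<and> open U \<and> F \<subseteq> (\<Union>i. A i) \<and> (\<Union>i. A i) \<subseteq> U \<and> measure N (U - F) < e"
    by (intro exI[of _ "\<Union>i<n. F i"] exI[of _ "\<Union>i. U i"]) simp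
qed

lemma finite_measure_closed_open_regular:
  fixes N :: "'a::metric_space measure"
  assumes fm: "finite_measure N" and sN: "sets N = sets borel" and "A \<in> sets borel"
  shows "closed_open_regular N A"
proof -
  have "A \<in> sigma_sets UNIV {S. open S}" using \<open>A \<in> sets borel\<close> by (simp add: sets_borel)
  then show ?thesis
  proof (induction rule: sigma_sets.induct)
    case (Basic S)
    then show ?case using closed_open_regular_open[OF fm sN] by simp
  next
    case Empty
    then show ?case using closed_open_regular_open[OF fm sN] by simp
  next
    case (Compl S)
    show ?case using Compl.IH by (rule closed_open_regular_Compl)
  next
    case (Union A)
    show ?case using Union.IH by (rule closed_open_regular_UN[OF fm sN])
  qed
qed

lemma emeasure_open_outer_approx_within:
  fixes M :: "'a::metric_space measure"
  assumes sM: "sets M = sets borel" and W: "open W" "emeasure M W < \<infinity>"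
    and A: "A \<in> sets borel" and "e > 0"
  obtains V where "open V" "A \<inter> W \<subseteq> V" "emeasure M (V - A) < ennreal e"
proof -
  define N where "N = density M (indicator W)"
  have Wm: "W \<in> sets M" using W sM by auto
  have sN: "sets N = sets borel" unfolding N_def using sM by simp
  have eN: "emeasure N X = emeasure M (W \<inter> X)" if "X \<in> sets M" for X
    unfolding N_def using Wm that by (rule emeasure_restricted)
  have "space N = UNIV" using sets_eq_imp_space_eq[OF sN] by simp
  then have "emeasure N (space N) = emeasure M W" using eN[of UNIV] sM by simp
  then have fm: "finite_measure N" using W by (intro finite_measureI) auto
  have "A \<inter> W \<in> sets borel" using A W by auto
  then have "closed_open_regular N (A \<inter> W)" by (rule finite_measure_closed_open_regular[OF fm sN])
  then obtain F U where FU: "closed F" "open U" "F \<subseteq> A \<inter> W" "A \<inter> W \<subseteq> U" "measure N (U - F) < e"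
    using \<open>e > 0\<close> unfolding closed_open_regular_def by meson
  have "emeasure M (U \<inter> W - A) \<le> emeasure M (W \<inter> (U - F))"
    using FU sM W by (intro emeasure_mono) auto
  also have "\<dots> = emeasure N (U - F)" using FU sM W by (simp add: eN)
  also have "\<dots> = ennreal (measure N (U - F))"
    using fm by (simp add: finite_measure.emeasure_eq_measure)
  also have "\<dots> < ennreal e" using FU(5) \<open>e > 0\<close> by (simp add: ennreal_lessI)
  finally show ?thesis using FU W by (intro that[of "U \<inter> W"]) auto
qed

lemma diamE_ge_dist: "x \<in> B \<Longrightarrow> y \<in> B \<Longrightarrow> ennreal (dist x y) \<le> diamE B"
  unfolding diamE_def by (meson SUP_upper order_trans)

lemma diamE_empty [simp]: "diamE {} = 0"
  unfolding diamE_def by (simp add: bot_ennreal)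

lemma subset_ball_if_diamE_less:
  assumes "p \<in> B" "diamE B < ennreal r"
  shows "B \<subseteq> ball p r"
proof
  fix x assume "x \<in> B"
  then have "ennreal (dist p x) < ennreal r"
    using diamE_ge_dist[OF \<open>p \<in> B\<close>] assms(2) by (blast intro: le_less_trans)
  then show "x \<in> ball p r" by (simp add: ennreal_less_iff)
qed

lemma open_enlarge4: "open (enlarge4 B)"
proof (cases "diamE B = top")
  case True
  then have "enlarge4 B = UNIV" unfolding enlarge4_def by (auto simp: ennreal_mult_top)
  then show ?thesis by simp
next
  case False
  then obtain d where d: "diamE B = ennreal d" "0 \<le> d" by (cases "diamE B") auto
  have "enlarge4 B = {x. infdist x B < 3/2 * d}"
    unfolding enlarge4_def d using d(2)
    by (auto simp: ennreal_mult[symmetric] ennreal_less_iff infdist_nonneg)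
  also have "open \<dots>" by (intro open_Collect_less continuous_intros continuous_on_infdist) auto
  finally show ?thesis .
qed

lemma diamE_pos_if_enlarge4_nonempty: "enlarge4 B \<noteq> {} \<Longrightarrow> 0 < diamE B"
  unfolding enlarge4_def by (auto simp: zero_less_iff_neq_zero)

lemma subset_enlarge4:
  assumes "B \<inter> B' \<noteq> {}" "diamE B < ennreal (3/2) * diamE B'"
  shows "B \<subseteq> enlarge4 B'"
proof
  fix x assume x: "x \<in> B"
  obtain z where z: "z \<in> B" "z \<in> B'" using assms(1) by auto
  have "ennreal (infdist x B') \<le> ennreal (dist x z)" using z(2) by (intro ennreal_leI infdist_le)
  also have "\<dots> \<le> diamE B" using x z(1) by (rule diamE_ge_dist)
  also have "\<dots> < ennreal (3/2) * diamE B'" by fact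
  finally show "x \<in> enlarge4 B'" unfolding enlarge4_def by simp
qed

(* 3/2 diamE B' is the radius of enlarge4 B', so such a B lies in enlarge4 B' (subset_enlarge4). *)
definition vitali_subfamily :: "'a::metric_space set set \<Rightarrow> 'a set set \<Rightarrow> bool" where
  "vitali_subfamily F G \<longleftrightarrow> G \<subseteq> F \<and> disjoint G \<and>
     (\<forall>B\<in>F. (\<exists>B'\<in>G. B \<inter> B' \<noteq> {}) \<longrightarrow>
        (\<exists>B'\<in>G. B \<inter> B' \<noteq> {} \<and> diamE B < ennreal (3/2) * diamE B'))"

lemma vitali_subfamily_Union_chain:
  assumes "C \<in> chains {G. vitali_subfamily F G}"
  shows "vitali_subfamily F (\<Union>C)"
  unfolding vitali_subfamily_def
proof (intro conjI ballI impI)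
  have vC: "\<And>G. G \<in> C \<Longrightarrow> vitali_subfamily F G"
    and ch: "\<And>X Y. X \<in> C \<Longrightarrow> Y \<in> C \<Longrightarrow> X \<subseteq> Y \<or> Y \<subseteq> X"
    using assms unfolding chains_def chain_subset_def by auto
  then show "\<Union>C \<subseteq> F" unfolding vitali_subfamily_def by blast
  show "disjoint (\<Union>C)"
  proof (rule pairwiseI)
    fix X Y assume "X \<in> \<Union>C" "Y \<in> \<Union>C" "X \<noteq> Y"
    then obtain G where "G \<in> C" "X \<in> G" "Y \<in> G" using ch by blast
    then show "disjnt X Y" using vC[of G] \<open>X \<noteq> Y\<close>
      unfolding vitali_subfamily_def by (auto dest: pairwiseD)
  qed
  fix B assume "B \<in> F" "\<exists>B'\<in>\<Union>C. B \<inter> B' \<noteq> {}"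
  then obtain G B' where "G \<in> C" "B' \<in> G" "B \<inter> B' \<noteq> {}" by blast
  then obtain B'' where "B'' \<in> G" "B \<inter> B'' \<noteq> {} \<and> diamE B < ennreal (3/2) * diamE B''"
    using vC[of G] \<open>B \<in> F\<close> unfolding vitali_subfamily_def by blast
  then show "\<exists>B'\<in>\<Union>C. B \<inter> B' \<noteq> {} \<and> diamE B < ennreal (3/2) * diamE B'"
    using \<open>G \<in> C\<close> by blast
qed

lemma ennreal_SUP_less_mult_elem:
  fixes f :: "'b \<Rightarrow> ennreal" and c :: real
  assumes pos: "0 < (SUP x\<in>X. f x)" and fin: "(SUP x\<in>X. f x) < \<infinity>" and "1 < c"
  obtains x where "x \<in> X" "(SUP x\<in>X. f x) < ennreal c * f x"
proof -
  obtain s where s: "(SUP x\<in>X. f x) = ennreal s" "0 < s"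
    using pos fin by (cases "SUP x\<in>X. f x") auto
  moreover have "s / c < s" using divide_strict_left_mono[of 1 c s] s(2) \<open>1 < c\<close> by simp
  ultimately have "ennreal (s / c) < (SUP x\<in>X. f x)" by (simp add: ennreal_lessI)
  then obtain x where x: "x \<in> X" "ennreal (s / c) < f x" by (auto simp: less_SUP_iff)
  then have "f x \<le> ennreal s" using s(1) by (metis SUP_upper)
  then obtain d where d: "f x = ennreal d" "0 \<le> d" by (cases "f x") (auto simp: top_unique)
  have "s / c < d" using x(2) d s(2) \<open>1 < c\<close> by (simp add: ennreal_less_iff)
  then have "s < c * d" using \<open>1 < c\<close> by (simp add: field_simps)
  then have "(SUP x\<in>X. f x) < ennreal c * f x"
    using s d \<open>1 < c\<close> by (simp add: ennreal_mult[symmetric] ennreal_less_iff)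
  with x(1) show ?thesis by (rule that)
qed

lemma vitali_subfamily_insert:
  assumes G: "vitali_subfamily F G"
    and diam: "\<And>B. B \<in> F \<Longrightarrow> 0 < diamE B \<and> diamE B \<le> ennreal R"
    and B1: "B1 \<in> F" "\<forall>B'\<in>G. B1 \<inter> B' = {}"
  shows "\<exists>B0. B0 \<notin> G \<and> vitali_subfamily F (insert B0 G)"
proof -
  define R' where "R' = {B\<in>F. \<forall>B'\<in>G. B \<inter> B' = {}}"
  have "B1 \<in> R'" using B1 unfolding R'_def by auto
  then have "0 < (SUP B\<in>R'. diamE B)" using diam[OF B1(1)] by (metis SUP_upper order_less_le_trans)
  moreover have "(SUP B\<in>R'. diamE B) < \<infinity>"
    using diam unfolding R'_def by (intro le_less_trans[OF SUP_least]) auto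
  ultimately obtain B0 where B0: "B0 \<in> R'" and large: "(SUP B\<in>R'. diamE B) < ennreal (3/2) * diamE B0"
    by (rule ennreal_SUP_less_mult_elem) auto
  have "B0 \<noteq> {}" using B0 diam unfolding R'_def by fastforce
  then have "B0 \<notin> G" using B0 unfolding R'_def by auto
  moreover have "vitali_subfamily F (insert B0 G)"
    unfolding vitali_subfamily_def
  proof (intro conjI ballI impI)
    show "insert B0 G \<subseteq> F" "disjoint (insert B0 G)"
      using G B0 unfolding vitali_subfamily_def R'_def
      by (auto simp: pairwise_insert disjnt_def Int_commute)
  next
    fix B assume "B \<in> F" and meets: "\<exists>B'\<in>insert B0 G. B \<inter> B' \<noteq> {}"
    show "\<exists>B'\<in>insert B0 G. B \<inter> B' \<noteq> {} \<and> diamE B < ennreal (3/2) * diamE B'"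
    proof (cases "\<exists>B'\<in>G. B \<inter> B' \<noteq> {}")
      case True
      then show ?thesis using G \<open>B \<in> F\<close> unfolding vitali_subfamily_def by blast
    next
      case False
      then have "B \<in> R'" using \<open>B \<in> F\<close> unfolding R'_def by auto
      then have "diamE B < ennreal (3/2) * diamE B0"
        by (rule le_less_trans[OF SUP_upper large])
      then show ?thesis using meets False by blast
    qed
  qed
  ultimately show ?thesis by blast
qed

lemma enlarge4_vitali_covering:
  assumes diam: "\<And>B. B \<in> F \<Longrightarrow> 0 < diamE B \<and> diamE B \<le> ennreal R"
  obtains G where "G \<subseteq> F" "disjoint G" "\<forall>B\<in>F. \<exists>B'\<in>G. B \<subseteq> enlarge4 B'"
proof -
  have "\<forall>C\<in>chains {G. vitali_subfamily F G}. \<Union>C \<in> {G. vitali_subfamily F G}"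
    using vitali_subfamily_Union_chain by blast
  then obtain G where G: "vitali_subfamily F G"
    and max: "\<And>G'. vitali_subfamily F G' \<Longrightarrow> G \<subseteq> G' \<Longrightarrow> G' = G"
    using Zorn_Lemma[of "{G. vitali_subfamily F G}"] by auto
  have meets: "\<exists>B'\<in>G. B \<inter> B' \<noteq> {}" if B: "B \<in> F" for B
  proof (rule ccontr)
    assume "\<not> ?thesis"
    then obtain B0 where "B0 \<notin> G" "vitali_subfamily F (insert B0 G)"
      using vitali_subfamily_insert[OF G diam B] by blast
    then show False using max[of "insert B0 G"] by blast
  qed
  have "\<exists>B'\<in>G. B \<subseteq> enlarge4 B'" if B: "B \<in> F" for B
  proof -
    obtain B' where "B' \<in> G" "B \<inter> B' \<noteq> {}" "diamE B < ennreal (3/2) * diamE B'"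
      using meets[OF B] G B unfolding vitali_subfamily_def by meson
    then show ?thesis using subset_enlarge4 by blast
  qed
  with G show ?thesis by (intro that[of G]) (auto simp: vitali_subfamily_def)
qed

lemma emeasure_countable_UN_le:
  assumes I: "countable I" and X: "\<And>i. i \<in> I \<Longrightarrow> X i \<in> sets M"
    and fin: "\<And>J. finite J \<Longrightarrow> J \<subseteq> I \<Longrightarrow> emeasure M (\<Union>(X ` J)) \<le> c"
  shows "emeasure M (\<Union>(X ` I)) \<le> c"
proof (cases "I = {}")
  case True
  then show ?thesis using fin[of "{}"] by simp
next
  case False
  define g where "g = from_nat_into I"
  have rg: "range g = I" using False I unfolding g_def by (simp add: range_from_nat_into)
  define Y where "Y n = \<Union>(X ` g ` {..<n})" for n
  have "\<Union>(X ` I) = (\<Union>n. Y n)" unfolding Y_def rg[symmetric] by blast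
  moreover have "range Y \<subseteq> sets M" unfolding Y_def using X rg by auto
  moreover have "incseq Y" unfolding Y_def by (intro monoI UN_mono image_mono) auto
  ultimately have "emeasure M (\<Union>(X ` I)) = (SUP n. emeasure M (Y n))"
    by (simp add: SUP_emeasure_incseq)
  also have "\<dots> \<le> c" unfolding Y_def using rg by (intro SUP_least fin) auto
  finally show ?thesis .
qed

lemma emeasure_Union_enlarge4_le:
  fixes M :: "'a::{metric_space,second_countable_topology} measure"
  assumes sM: "sets M = sets borel" and G: "disjoint G" "G \<subseteq> sets M" and T: "T \<in> sets M"
    and enl: "\<And>B. B \<in> G \<Longrightarrow> emeasure M (enlarge4 B) \<le> c * emeasure M (B \<inter> T)"
  shows "emeasure M (\<Union>(enlarge4 ` G)) \<le> c * emeasure M T"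
proof -
  obtain F where "F \<subseteq> enlarge4 ` G" "countable F" "\<Union>F = \<Union>(enlarge4 ` G)"
    using Lindelof[of "enlarge4 ` G"] open_enlarge4 by blast
  then obtain G' where G': "countable G'" "G' \<subseteq> G" "\<Union>(enlarge4 ` G') = \<Union>(enlarge4 ` G)"
    using countable_subset_image by metis
  have enl_m: "enlarge4 B \<in> sets M" for B using sM open_enlarge4[of B] by (simp add: borel_open)
  have "emeasure M (\<Union>(enlarge4 ` G')) \<le> c * emeasure M T"
  proof (rule emeasure_countable_UN_le[OF G'(1) enl_m])
    fix J assume J: "finite J" "J \<subseteq> G'"
    have "emeasure M (\<Union>(enlarge4 ` J)) \<le> (\<Sum>B\<in>J. emeasure M (enlarge4 B))"
      using J(1) enl_m by (intro emeasure_subadditive_finite) auto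
    also have "\<dots> \<le> (\<Sum>B\<in>J. c * emeasure M (B \<inter> T))"
      using J G' enl by (intro sum_mono) auto
    also have "\<dots> = c * emeasure M (\<Union>B\<in>J. B \<inter> T)"
    proof -
      have "disjoint_family_on (\<lambda>B. B \<inter> T) J"
        unfolding disjoint_family_on_def
      proof (intro ballI impI)
        fix B1 B2 assume "B1 \<in> J" "B2 \<in> J" "B1 \<noteq> B2"
        then have "disjnt B1 B2" using G(1) J G' by (meson pairwiseD subsetD)
        then show "(B1 \<inter> T) \<inter> (B2 \<inter> T) = {}" by (auto simp: disjnt_def)
      qed
      then have "(\<Sum>B\<in>J. emeasure M (B \<inter> T)) = emeasure M (\<Union>B\<in>J. B \<inter> T)"
        using J G' G T by (intro sum_emeasure) (auto intro!: sets.Int)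
      then show ?thesis by (simp add: sum_distrib_left[symmetric])
    qed
    also have "\<dots> \<le> c * emeasure M T"
      using J G' G T by (intro mult_left_mono emeasure_mono) auto
    finally show "emeasure M (\<Union>(enlarge4 ` J)) \<le> c * emeasure M T" .
  qed
  then show ?thesis using G' by simp
qed

definition doubling_set :: "'a::metric_space measure \<Rightarrow> ennreal \<Rightarrow> 'a set \<Rightarrow> bool" where
  "doubling_set M C B \<longleftrightarrow> 0 < emeasure M (enlarge4 B) \<and> emeasure M (enlarge4 B) \<le> C * emeasure M B"

definition density_exceptions :: "'a::metric_space measure \<Rightarrow> 'a set \<Rightarrow> nat \<Rightarrow> nat \<Rightarrow> 'a set" where
  "density_exceptions M A K k = {p \<in> A. \<forall>\<delta>>0. \<exists>B. B \<in> sets borel \<and> p \<in> B \<and> diamE B < ennreal \<delta> \<and>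
     doubling_set M (of_nat K) B \<and> emeasure M B < of_nat (Suc k) * emeasure M (B - A)}"

definition density_point :: "'a::metric_space measure \<Rightarrow> 'a set \<Rightarrow> 'a \<Rightarrow> bool" where
  "density_point M A p \<longleftrightarrow> (\<forall>K k. \<exists>\<delta>>0. \<forall>B. B \<in> sets borel \<and> p \<in> B \<and> diamE B < ennreal \<delta> \<and>
     doubling_set M (of_nat K) B \<longrightarrow> of_nat (Suc k) * emeasure M (B - A) \<le> emeasure M B)"

lemma density_point_iff_notin_density_exceptions:
  "p \<in> A \<Longrightarrow> density_point M A p \<longleftrightarrow> (\<forall>K k. p \<notin> density_exceptions M A K k)"
  unfolding density_point_def density_exceptions_def by (auto simp: not_less; meson not_less)

lemma doubling_set_mono: "doubling_set M C B \<Longrightarrow> C \<le> C' \<Longrightarrow> doubling_set M C' B"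
  unfolding doubling_set_def by (meson mult_right_mono order_trans zero_le)

lemma doubling_set_emeasure_pos: "doubling_set M C B \<Longrightarrow> 0 < emeasure M B"
  unfolding doubling_set_def by (metis mult_zero_right not_gr_zero not_le)

lemma density_exceptions_vitali_cover:
  fixes M :: "'a::metric_space measure"
  assumes "open V"
  obtains G where "disjoint G" "G \<subseteq> sets borel"
    "\<forall>B\<in>G. B \<subseteq> V \<and> emeasure M (enlarge4 B) \<le> of_nat K * (of_nat (Suc k) * emeasure M (B - A))"
    "density_exceptions M A K k \<inter> V \<subseteq> \<Union>(enlarge4 ` G)"
proof -
  define F where "F = {B \<in> sets borel. B \<subseteq> V \<and> diamE B \<le> 1 \<and> doubling_set M (of_nat K) B \<and>
     emeasure M B < of_nat (Suc k) * emeasure M (B - A)}"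
  have "0 < diamE B \<and> diamE B \<le> ennreal 1" if "B \<in> F" for B
  proof -
    have "0 < emeasure M (enlarge4 B)" "diamE B \<le> 1"
      using that unfolding F_def doubling_set_def by auto
    moreover from this(1) have "enlarge4 B \<noteq> {}" by auto
    ultimately show ?thesis using diamE_pos_if_enlarge4_nonempty by simp
  qed
  then obtain G where G: "G \<subseteq> F" "disjoint G" "\<forall>B\<in>F. \<exists>B'\<in>G. B \<subseteq> enlarge4 B'"
    by (rule enlarge4_vitali_covering)
  have "density_exceptions M A K k \<inter> V \<subseteq> \<Union>(enlarge4 ` G)"
  proof
    fix p assume p: "p \<in> density_exceptions M A K k \<inter> V"
    then obtain \<rho>0 where "0 < \<rho>0" "ball p \<rho>0 \<subseteq> V" using \<open>open V\<close> openE by blast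
    define \<rho> where "\<rho> = min \<rho>0 1"
    have \<rho>: "0 < \<rho>" "\<rho> \<le> 1" "ball p \<rho> \<subseteq> V"
      using \<open>0 < \<rho>0\<close> \<open>ball p \<rho>0 \<subseteq> V\<close> unfolding \<rho>_def by auto
    then obtain B where B: "B \<in> sets borel" "p \<in> B" "diamE B < ennreal \<rho>"
      "doubling_set M (of_nat K) B" "emeasure M B < of_nat (Suc k) * emeasure M (B - A)"
      using p unfolding density_exceptions_def by blast
    have "B \<subseteq> V" using subset_ball_if_diamE_less[OF B(2,3)] \<rho>(3) by blast
    moreover have "diamE B \<le> 1" using B(3) \<rho>(2) by (metis ennreal_le_1 less_imp_le order_trans)
    ultimately have "B \<in> F" using B unfolding F_def by blast
    then show "p \<in> \<Union>(enlarge4 ` G)" using G(3) B(2) by blast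
  qed
  moreover have "B \<subseteq> V \<and> emeasure M (enlarge4 B) \<le> of_nat K * (of_nat (Suc k) * emeasure M (B - A))"
    if "B \<in> G" for B
  proof -
    have "emeasure M (enlarge4 B) \<le> of_nat K * emeasure M B"
      "emeasure M B \<le> of_nat (Suc k) * emeasure M (B - A)"
      using that G(1) unfolding F_def doubling_set_def by auto
    then have "emeasure M (enlarge4 B) \<le> of_nat K * (of_nat (Suc k) * emeasure M (B - A))"
      by (meson mult_left_mono order_trans zero_le)
    moreover have "B \<subseteq> V" using that G(1) unfolding F_def by auto
    ultimately show ?thesis by blast
  qed
  moreover have "G \<subseteq> sets borel" using G(1) unfolding F_def by auto
  ultimately show ?thesis using G(2) by (intro that[of G]) auto
qed

lemma density_exceptions_cover_small:
  fixes M :: "'a::{metric_space,second_countable_topology} measure"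
  assumes sM: "sets M = sets borel" and W: "open W" "emeasure M W < \<infinity>"
    and A: "A \<in> sets borel" and "e > 0"
  obtains U where "open U" "density_exceptions M A K k \<inter> W \<subseteq> U" "emeasure M U \<le> ennreal e"
proof -
  define L where "L = real K * real (Suc k)"
  have "L \<ge> 0" unfolding L_def by simp
  then have "e / (L + 1) > 0" using \<open>e > 0\<close> by simp
  then obtain V where V: "open V" "A \<inter> W \<subseteq> V" "emeasure M (V - A) < ennreal (e / (L + 1))"
    by (rule emeasure_open_outer_approx_within[OF sM W A])
  obtain G where G: "disjoint G" "G \<subseteq> sets borel"
    "\<forall>B\<in>G. B \<subseteq> V \<and> emeasure M (enlarge4 B) \<le> of_nat K * (of_nat (Suc k) * emeasure M (B - A))"
    "density_exceptions M A K k \<inter> V \<subseteq> \<Union>(enlarge4 ` G)"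
    by (rule density_exceptions_vitali_cover[OF V(1)])
  have "emeasure M (\<Union>(enlarge4 ` G)) \<le> ennreal L * emeasure M (V - A)"
  proof (rule emeasure_Union_enlarge4_le[OF sM G(1)])
    show "G \<subseteq> sets M" "V - A \<in> sets M" using G(2) V(1) A sM by auto
    fix B assume "B \<in> G"
    then have "B \<subseteq> V" "emeasure M (enlarge4 B) \<le> of_nat K * (of_nat (Suc k) * emeasure M (B - A))"
      using G(3) by auto
    moreover from this(1) have "B \<inter> (V - A) = B - A" by blast
    ultimately show "emeasure M (enlarge4 B) \<le> ennreal L * emeasure M (B \<inter> (V - A))"
      by (simp add: L_def ennreal_mult ennreal_of_nat_eq_real_of_nat mult.assoc del: of_nat_Suc)
  qed
  also have "\<dots> \<le> ennreal L * ennreal (e / (L + 1))" using V(3) by (intro mult_left_mono) auto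
  also have "\<dots> \<le> ennreal e"
    using \<open>L \<ge> 0\<close> \<open>e > 0\<close> by (simp add: ennreal_mult[symmetric] field_simps)
  finally have "emeasure M (\<Union>(enlarge4 ` G)) \<le> ennreal e" .
  moreover have "density_exceptions M A K k \<subseteq> A" unfolding density_exceptions_def by blast
  then have "density_exceptions M A K k \<inter> W \<subseteq> \<Union>(enlarge4 ` G)" using G(4) V(2) by blast
  ultimately show ?thesis using open_enlarge4 by (intro that[of "\<Union>(enlarge4 ` G)"]) auto
qed

lemma null_sets_INT_emeasure_le_inverse_Suc:
  assumes U: "\<And>m. U m \<in> sets M" "\<And>m. emeasure M (U m) \<le> ennreal (1 / Suc m)"
  shows "(\<Inter>m. U m) \<in> null_sets M"
proof -
  have "emeasure M (\<Inter>m. U m) \<le> 0 + ennreal e" if "e > 0" for e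
  proof -
    obtain m where "1 / Suc m < e" using nat_approx_posE \<open>e > 0\<close> by metis
    have "emeasure M (\<Inter>m. U m) \<le> emeasure M (U m)" using U by (intro emeasure_mono) auto
    also have "\<dots> \<le> ennreal e"
      using U(2)[of m] \<open>1 / Suc m < e\<close> by (meson ennreal_leI less_imp_le order_trans)
    finally show ?thesis by simp
  qed
  then have "emeasure M (\<Inter>m. U m) \<le> 0" by (rule ennreal_le_epsilon)
  then show ?thesis using U by (simp add: null_sets_def)
qed

lemma AE_notin_if_locally_small:
  fixes M :: "'a::second_countable_topology measure"
  assumes sM: "sets M = sets borel" and locfin: "locally_finite_measure M"
    and small: "\<And>W e. open W \<Longrightarrow> emeasure M W < \<infinity> \<Longrightarrow> e > 0 \<Longrightarrow>
      \<exists>U\<in>sets M. E \<inter> W \<subseteq> U \<and> emeasure M U \<le> ennreal e"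
  shows "AE p in M. p \<notin> E"
proof -
  obtain \<B> :: "'a set set" where \<B>: "countable \<B>" "topological_basis \<B>"
    using ex_countable_basis by blast
  define \<W> where "\<W> = {W \<in> \<B>. emeasure M W < \<infinity>}"
  have "\<exists>U\<in>sets M. E \<inter> W \<subseteq> U \<and> emeasure M U \<le> ennreal (1 / Suc m)" if "W \<in> \<W>" for W m
    using that \<B>(2) topological_basis_open unfolding \<W>_def by (intro small) auto
  then obtain U where U: "\<And>W m. W \<in> \<W> \<Longrightarrow> U W m \<in> sets M \<and> E \<inter> W \<subseteq> U W m \<and>
      emeasure M (U W m) \<le> ennreal (1 / Suc m)"
    by metis
  define N where "N = (\<Union>W\<in>\<W>. \<Inter>m. U W m)"
  have "N \<in> null_sets M"
    unfolding N_def using \<B>(1) U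
    by (intro null_sets_UN' null_sets_INT_emeasure_le_inverse_Suc) (auto simp: \<W>_def)
  moreover have "E \<subseteq> N"
  proof
    fix p assume "p \<in> E"
    obtain V where "open V" "p \<in> V" "emeasure M V < \<infinity>"
      using locfin unfolding locally_finite_measure_def by blast
    obtain W where W: "W \<in> \<B>" "p \<in> W" "W \<subseteq> V"
      using \<open>open V\<close> \<open>p \<in> V\<close> by (rule topological_basisE[OF \<B>(2)])
    then have "emeasure M W \<le> emeasure M V"
      using \<open>open V\<close> sM by (intro emeasure_mono) auto
    with W \<open>emeasure M V < \<infinity>\<close> have "W \<in> \<W>" unfolding \<W>_def by auto
    moreover have "p \<in> U W m" for m using U[OF \<open>W \<in> \<W>\<close>, of m] \<open>p \<in> E\<close> W(2) by blast
    ultimately show "p \<in> N" unfolding N_def by blast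
  qed
  ultimately show ?thesis by (intro AE_I') auto
qed

lemma AE_density_point:
  fixes M :: "'a::{metric_space,second_countable_topology} measure"
  assumes sM: "sets M = sets borel" and locfin: "locally_finite_measure M" and A: "A \<in> sets borel"
  shows "AE p in M. p \<in> A \<longrightarrow> density_point M A p"
proof -
  have "AE p in M. p \<notin> density_exceptions M A K k" for K k
  proof (rule AE_notin_if_locally_small[OF sM locfin])
    fix W and e :: real assume "open W" "emeasure M W < \<infinity>" "e > 0"
    then obtain U where "open U" "density_exceptions M A K k \<inter> W \<subseteq> U" "emeasure M U \<le> ennreal e"
      by (rule density_exceptions_cover_small[OF sM _ _ A])
    then show "\<exists>U\<in>sets M. density_exceptions M A K k \<inter> W \<subseteq> U \<and> emeasure M U \<le> ennreal e"
      using sM by auto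
  qed
  then have "AE p in M. \<forall>K k. p \<notin> density_exceptions M A K k"
    unfolding AE_all_countable by blast
  then show ?thesis
    by eventually_elim (simp add: density_point_iff_notin_density_exceptions)
qed

lemma AE_density_point_small_oscillation:
  fixes M :: "'a::{metric_space,second_countable_topology} measure"
    and f :: "'a \<Rightarrow> 'b::{metric_space,second_countable_topology}"
  assumes sM: "sets M = sets borel" and locfin: "locally_finite_measure M"
    and f: "f \<in> borel_measurable borel"
  shows "AE p in M. \<forall>r>0. \<exists>A\<in>sets borel. p \<in> A \<and> (\<forall>x\<in>A. dist (f p) (f x) \<le> r) \<and> density_point M A p"
proof -
  obtain D :: "'b set" where D: "countable D" "\<And>X. open X \<Longrightarrow> X \<noteq> {} \<Longrightarrow> \<exists>d\<in>D. d \<in> X"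
    using countable_dense_setE by blast
  define P where "P d j = f -` ball d (1 / Suc j)" for d j
  have P: "P d j \<in> sets borel" for d j
    using measurable_sets[OF f, of "ball d (1 / Suc j)"] unfolding P_def by simp
  have "AE p in M. \<forall>(d, j) \<in> D \<times> UNIV. p \<in> P d j \<longrightarrow> density_point M (P d j) p"
    using D(1) by (subst AE_ball_countable) (auto intro: AE_density_point[OF sM locfin P])
  then show ?thesis
  proof (rule eventually_mono, intro allI impI)
    fix p and r :: real
    assume dens: "\<forall>(d, j) \<in> D \<times> UNIV. p \<in> P d j \<longrightarrow> density_point M (P d j) p" and "r > 0"
    then obtain j :: nat where j: "1 / Suc j < r / 2" using nat_approx_posE half_gt_zero by metis
    obtain d where d: "d \<in> D" "dist d (f p) < 1 / Suc j"
      using D(2)[of "ball (f p) (1 / Suc j)"] by (auto simp: dist_commute)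
    have "p \<in> P d j" using d unfolding P_def by simp
    moreover have "dist (f p) (f x) \<le> r" if "x \<in> P d j" for x
      using that d j dist_triangle3[of "f p" "f x" d] unfolding P_def by simp
    ultimately show "\<exists>A\<in>sets borel. p \<in> A \<and> (\<forall>x\<in>A. dist (f p) (f x) \<le> r) \<and> density_point M A p"
      using dens d(1) P by blast
  qed
qed

lemma set_nn_integral_divide_le:
  fixes g :: "'a \<Rightarrow> ennreal"
  assumes B: "B \<in> sets M" and A: "A \<in> sets M" and pos: "0 < emeasure M B"
    and bound: "\<And>x. x \<in> B \<Longrightarrow> g x \<le> b" and near: "\<And>x. x \<in> B \<Longrightarrow> x \<in> A \<Longrightarrow> g x \<le> r"
    and small: "emeasure M (B - A) \<le> \<theta> * emeasure M B"
  shows "(\<integral>\<^sup>+x\<in>B. g x \<partial>M) / emeasure M B \<le> r + b * \<theta>"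
proof (rule divide_le_posI_ennreal[OF pos])
  have "g x * indicator B x \<le> r * indicator B x + b * indicator (B - A) x" for x
    using bound[of x] near[of x] by (cases "x \<in> B"; cases "x \<in> A") (auto intro: add_increasing)
  then have "(\<integral>\<^sup>+x\<in>B. g x \<partial>M) \<le> (\<integral>\<^sup>+x. r * indicator B x + b * indicator (B - A) x \<partial>M)"
    by (intro nn_integral_mono)
  also have "\<dots> = r * emeasure M B + b * emeasure M (B - A)"
    using B A by (simp add: nn_integral_add nn_integral_cmult_indicator)
  also have "\<dots> \<le> r * emeasure M B + b * (\<theta> * emeasure M B)"
    using small by (intro add_left_mono mult_left_mono) auto
  also have "\<dots> = emeasure M B * (r + b * \<theta>)" by (simp add: algebra_simps)
  finally show "(\<integral>\<^sup>+x\<in>B. g x \<partial>M) \<le> emeasure M B * (r + b * \<theta>)" .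
qed

lemma average_dist_le:
  fixes M :: "'a::metric_space measure" and f :: "'a \<Rightarrow> 'b::metric_space"
  assumes sM: "sets M = sets borel" and B: "B \<in> sets borel" "0 < emeasure M B"
    and A: "A \<in> sets borel" and "0 \<le> r" and near: "\<forall>x\<in>A. dist (f p) (f x) \<le> r"
    and bnd: "\<And>x. dist (f p) (f x) \<le> b"
    and dens: "of_nat (Suc k) * emeasure M (B - A) \<le> emeasure M B"
  shows "(\<integral>\<^sup>+x\<in>B. ennreal (dist (f p) (f x)) \<partial>M) / emeasure M B \<le> ennreal (r + b / Suc k)"
proof -
  have "b \<ge> 0" using bnd[of p] by simp
  have "ennreal (1 / Suc k) * of_nat (Suc k) = 1"
    by (simp add: ennreal_of_nat_eq_real_of_nat ennreal_mult[symmetric] del: of_nat_Suc)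
  then have "emeasure M (B - A) = ennreal (1 / Suc k) * (of_nat (Suc k) * emeasure M (B - A))"
    by (simp add: mult.assoc[symmetric])
  also have "\<dots> \<le> ennreal (1 / Suc k) * emeasure M B"
    using dens by (rule mult_left_mono) simp
  finally have "(\<integral>\<^sup>+x\<in>B. ennreal (dist (f p) (f x)) \<partial>M) / emeasure M B
      \<le> ennreal r + ennreal b * ennreal (1 / Suc k)"
    using A B sM bnd near by (intro set_nn_integral_divide_le) (simp_all add: ennreal_leI)
  also have "\<dots> = ennreal (r + b / Suc k)"
    using \<open>0 \<le> r\<close> \<open>b \<ge> 0\<close> by (simp add: ennreal_mult[symmetric])
  finally show ?thesis .
qed

lemma average_dist_tendsto_0:
  fixes M :: "'a::metric_space measure" and f :: "'a \<Rightarrow> 'b::metric_space"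
  assumes sM: "sets M = sets borel" and bnd: "\<And>x. dist (f p) (f x) \<le> b"
    and near: "\<And>r. r > 0 \<Longrightarrow> \<exists>A\<in>sets borel. p \<in> A \<and> (\<forall>x\<in>A. dist (f p) (f x) \<le> r) \<and> density_point M A p"
    and B: "\<And>n. B n \<in> sets borel" "\<And>n. p \<in> B n" "(\<lambda>n. diamE (B n)) \<longlonglongrightarrow> 0"
    and dbl: "\<And>n. doubling_set M (ennreal C) (B n)"
  shows "(\<lambda>n. (\<integral>\<^sup>+x\<in>B n. ennreal (dist (f p) (f x)) \<partial>M) / emeasure M (B n)) \<longlonglongrightarrow> 0"
proof (rule tendsto_zero_ennreal)
  fix \<epsilon> :: real assume "0 < \<epsilon>"
  then obtain A where A: "A \<in> sets borel" "\<forall>x\<in>A. dist (f p) (f x) \<le> \<epsilon>/4" "density_point M A p"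
    using near[of "\<epsilon>/4"] by auto
  have "b \<ge> 0" using bnd[of p] by simp
  obtain k :: nat where "4 * b / \<epsilon> \<le> real k" using real_arch_simple by blast
  then have k: "b / real (Suc k) \<le> \<epsilon>/4"
    using \<open>0 < \<epsilon>\<close> \<open>b \<ge> 0\<close> by (simp add: field_simps)
  define K where "K = nat \<lceil>C\<rceil>"
  have CK: "ennreal C \<le> of_nat K"
    unfolding K_def by (metis ennreal_of_nat_eq_real_of_nat ennreal_leI of_nat_ceiling)
  obtain \<delta> where "\<delta> > 0" and dens: "\<And>B'. B' \<in> sets borel \<and> p \<in> B' \<and> diamE B' < ennreal \<delta> \<and>
      doubling_set M (of_nat K) B' \<Longrightarrow> of_nat (Suc k) * emeasure M (B' - A) \<le> emeasure M B'"
    using A(3) unfolding density_point_def by meson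
  have "eventually (\<lambda>n. diamE (B n) < ennreal \<delta>) sequentially"
    using order_tendstoD(2)[OF B(3)] \<open>\<delta> > 0\<close> by simp
  then show "eventually (\<lambda>n. (\<integral>\<^sup>+x\<in>B n. ennreal (dist (f p) (f x)) \<partial>M) / emeasure M (B n)
      < ennreal \<epsilon>) sequentially"
  proof eventually_elim
    case (elim n)
    have "of_nat (Suc k) * emeasure M (B n - A) \<le> emeasure M (B n)"
      using dens B elim doubling_set_mono[OF dbl CK] by blast
    then have "(\<integral>\<^sup>+x\<in>B n. ennreal (dist (f p) (f x)) \<partial>M) / emeasure M (B n) \<le> ennreal (\<epsilon>/4 + b / Suc k)"
      using \<open>0 < \<epsilon>\<close> by (intro average_dist_le[OF sM B(1) doubling_set_emeasure_pos[OF dbl] A(1) _ A(2) bnd])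
        simp_all
    also have "\<dots> < ennreal \<epsilon>" using k \<open>0 < \<epsilon>\<close> by (intro ennreal_lessI) linarith+
    finally show ?case .
  qed
qed

theorem mainTheorem9:
  fixes M :: "'a::{metric_space, second_countable_topology} measure"
    and f :: "'a \<Rightarrow> 'b::{metric_space, second_countable_topology}"
  assumes borelM: "sets M = sets borel"
    and locfin: "locally_finite_measure M"
    and fmeas: "f \<in> borel_measurable borel"
    and fbdd: "bounded (range f)"
  shows "AE p in M. \<forall>B :: nat \<Rightarrow> 'a set.
           ((\<forall>n. B n \<in> sets borel) \<and> (\<lambda>n. diamE (B n)) \<longlonglongrightarrow> 0 \<and> (\<forall>n. p \<in> B n) \<and>
            (\<exists>C::real. C > 0 \<and> (\<forall>n. 0 < emeasure M (enlarge4 (B n)) \<and>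
                 emeasure M (enlarge4 (B n)) \<le> ennreal C * emeasure M (B n))))
           \<longrightarrow> (\<lambda>n. (\<integral>\<^sup>+ x\<in>B n. ennreal (dist (f p) (f x)) \<partial>M) / emeasure M (B n)) \<longlonglongrightarrow> 0"
proof -
  obtain b where b: "\<And>x y. dist (f x) (f y) \<le> b"
    using fbdd unfolding bounded_two_points by auto
  show ?thesis
    using AE_density_point_small_oscillation[OF borelM locfin fmeas]
  proof eventually_elim
    case (elim p)
    show ?case
    proof (intro allI impI, elim conjE exE)
      fix B :: "nat \<Rightarrow> 'a set" and C :: real
      assume "\<forall>n. B n \<in> sets borel" "(\<lambda>n. diamE (B n)) \<longlonglongrightarrow> 0" "\<forall>n. p \<in> B n"
        and "\<forall>n. 0 < emeasure M (enlarge4 (B n)) \<and> emeasure M (enlarge4 (B n)) \<le> ennreal C * emeasure M (B n)"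
      then show "(\<lambda>n. (\<integral>\<^sup>+ x\<in>B n. ennreal (dist (f p) (f x)) \<partial>M) / emeasure M (B n)) \<longlonglongrightarrow> 0"
        using elim by (intro average_dist_tendsto_0[OF borelM b]) (auto simp: doubling_set_def)
    qed
  qed
qed

end
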